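(* Let $\Bbbk$ be a unital ring, $n,r$ positive integers, $\varepsilon\in\{0,1/2\}$, $d=n-2\varepsilon$, and assume $d>r+1$. Then the kernel of $\Phi_{n,r+\varepsilon}:\Bbbk W_d\to\operatorname{End}_\Bbbk(\mathbf V^{\otimes r})$ contains the cell ideal $$\Bbbk\{y_{\mathfrak s\mathfrak t}\mid \mathfrak s,\mathfrak t\text{ standard},\ [\mathfrak s]=[\mathfrak t]\not\trianglelefteq(r+1,1^{d-r-1})\}$$ of $\Bbbk W_d$.
   Context: $\mathbf V$ is a free $\Bbbk$-module of rank $n$ with basis $\mathbf v_1,\dots,\mathbf v_n$. $W_n$ is the symmetric group on $\{1,\dots,n\}$, acting on $\mathbf V^{\otimes r}$ by $w(\mathbf v_{j_1}\otimes\cdots\otimes\mathbf v_{j_r})=\mathbf v_{w(j_1)}\otimes\cdots\otimes\mathbf v_{w(j_r)}$, giving $\Phi_{n,r}:\Bbbk W_n\to\operatorname{End}_\Bbbk(\mathbf V^{\otimes r})$. $W_{n-1}=\{w\in W_n:w(n)=n\}$ preserves $\mathbf V^{\otimes r}\otimes\mathbf v_n\subset\mathbf V^{\otimes(r+1)}$, identified with $\mathbf V^{\otimes r}$, giving $\Phi_{n,r+1/2}:\Bbbk W_{n-1}\to\operatorname{End}_\Bbbk(\mathbf V^{\otimes r})$. For a partition $\lambda$ of $d$: a $\lambda$-tableau is a bijective filling of the Young diagram by $1,\dots,d$; row-standard means rows increase, standard means rows and columns increase. $\mathfrak t^\lambda$ is the row-reading tableau, $W_\lambda$ its row stabiliser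 in $W_d$, $d(\mathfrak t)\in W_d$ the permutation with $\mathfrak t=d(\mathfrak t)\mathfrak t^\lambda$, $y_\lambda=\sum_{w\in W_\lambda}\operatorname{sgn}(w)w$, $y_{\mathfrak s\mathfrak t}=d(\mathfrak s)^{-1}y_\lambda d(\mathfrak t)$, and $[\mathfrak t]$ is the shape of $\mathfrak t$. $\trianglelefteq$ is the dominance order. The standard $y_{\mathfrak s\mathfrak t}$ form Murphy's cellular basis of $\Bbbk W_d$, and spans over upward-closed sets of shapes are cell ideals. *)

theory Defs
  imports Complex_Main "HOL-Combinatorics.Permutations"
begin

definition Wsym :: "nat \<Rightarrow> (nat \<Rightarrow> nat) set" where
  "Wsym d = {w. w permutes {1..d}}"

definition is_partition :: "nat \<Rightarrow> nat list \<Rightarrow> bool" where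
  "is_partition d mu \<longleftrightarrow> sorted_wrt (\<ge>) mu \<and> (\<forall>p\<in>set mu. 0 < p) \<and> sum_list mu = d"

text \<open>Young diagram (0-indexed cells (row, column)).\<close>
definition young :: "nat list \<Rightarrow> (nat \<times> nat) set" where
  "young mu = {(i, j). i < length mu \<and> j < mu ! i}"

definition tableau :: "nat \<Rightarrow> nat list \<Rightarrow> (nat \<times> nat \<Rightarrow> nat) \<Rightarrow> bool" where
  "tableau d mu t \<longleftrightarrow> bij_betw t (young mu) {1..d}"

definition standard :: "nat list \<Rightarrow> (nat \<times> nat \<Rightarrow> nat) \<Rightarrow> bool" where
  "standard mu t \<longleftrightarrow>
     (\<forall>i j. (i, j) \<in> young mu \<and> (i, Suc j) \<in> young mu \<longrightarrow> t (i, j) < t (i, Suc j)) \<and>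
     (\<forall>i j. (i, j) \<in> young mu \<and> (Suc i, j) \<in> young mu \<longrightarrow> t (i, j) < t (Suc i, j))"

definition row_reading :: "nat list \<Rightarrow> nat \<times> nat \<Rightarrow> nat" where
  "row_reading mu c = sum_list (take (fst c) mu) + snd c + 1"

text \<open>d(t): the permutation with t = d(t) t^mu.\<close>
definition dperm :: "nat \<Rightarrow> nat list \<Rightarrow> (nat \<times> nat \<Rightarrow> nat) \<Rightarrow> nat \<Rightarrow> nat" where
  "dperm d mu t = (\<lambda>k. if k \<in> {1..d} then t (inv_into (young mu) (row_reading mu) k) else k)"

definition row_stab :: "nat \<Rightarrow> nat list \<Rightarrow> (nat \<Rightarrow> nat) set" where
  "row_stab d mu = {w \<in> Wsym d. \<forall>c \<in> young mu.
      fst (inv_into (young mu) (row_reading mu) (w (row_reading mu c))) = fst c}"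

definition group_alg :: "nat \<Rightarrow> ((nat \<Rightarrow> nat) \<Rightarrow> 'k::ring_1) set" where
  "group_alg d = {x. \<forall>w. w \<notin> Wsym d \<longrightarrow> x w = 0}"

definition ga_delta :: "(nat \<Rightarrow> nat) \<Rightarrow> (nat \<Rightarrow> nat) \<Rightarrow> 'k::ring_1" where
  "ga_delta w = (\<lambda>u. if u = w then 1 else 0)"

definition ga_mult :: "nat \<Rightarrow> ((nat \<Rightarrow> nat) \<Rightarrow> 'k::ring_1) \<Rightarrow> ((nat \<Rightarrow> nat) \<Rightarrow> 'k) \<Rightarrow> (nat \<Rightarrow> nat) \<Rightarrow> 'k" where
  "ga_mult d x y = (\<lambda>u. \<Sum>v\<in>Wsym d. x v * y (inv v \<circ> u))"

definition y_lam :: "nat \<Rightarrow> nat list \<Rightarrow> (nat \<Rightarrow> nat) \<Rightarrow> 'k::ring_1" where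
  "y_lam d mu = (\<lambda>u. if u \<in> row_stab d mu then of_int (sign u) else 0)"

definition y_st :: "nat \<Rightarrow> nat list \<Rightarrow> (nat \<times> nat \<Rightarrow> nat) \<Rightarrow> (nat \<times> nat \<Rightarrow> nat) \<Rightarrow> (nat \<Rightarrow> nat) \<Rightarrow> 'k::ring_1" where
  "y_st d mu s t = ga_mult d (ga_mult d (ga_delta (inv (dperm d mu s))) (y_lam d mu)) (ga_delta (dperm d mu t))"

definition cell_span :: "nat \<Rightarrow> (nat list \<Rightarrow> bool) \<Rightarrow> ((nat \<Rightarrow> nat) \<Rightarrow> 'k::ring_1) set" where
  "cell_span d P = {x. \<exists>S c. finite S \<and>
      S \<subseteq> {(mu, s, t). P mu \<and> tableau d mu s \<and> tableau d mu t \<and> standard mu s \<and> standard mu t} \<and>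
      x = (\<lambda>u. \<Sum>(mu, s, t)\<in>S. c (mu, s, t) * y_st d mu s t u)}"

definition dom_le :: "nat list \<Rightarrow> nat list \<Rightarrow> bool" where
  "dom_le mu nu \<longleftrightarrow> (\<forall>k. sum_list (take k mu) \<le> sum_list (take k nu))"

definition hook :: "nat \<Rightarrow> nat \<Rightarrow> nat list" where
  "hook d r = Suc r # replicate (d - r - 1) 1"

text \<open>Basis of V^{\<otimes> m}: tuples (v_{j_1},...,v_{j_m}) with 1 \<le> j_i \<le> n.\<close>
definition tuples :: "nat \<Rightarrow> nat \<Rightarrow> nat list set" where
  "tuples n m = {j. length j = m \<and> set j \<subseteq> {1..n}}"

text \<open>Coordinates (w.r.t. the tensor basis) of x applied to basis vector v_j, for x in kG.\<close>
definition tensor_action :: "(nat \<Rightarrow> nat) set \<Rightarrow> ((nat \<Rightarrow> nat) \<Rightarrow> 'k::ring_1) \<Rightarrow> nat list \<Rightarrow> nat list \<Rightarrow> 'k" where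
  "tensor_action G x j = (\<lambda>j'. \<Sum>w | w \<in> G \<and> map w j = j'. x w)"

text \<open>For eps = 0 the group is W_n acting on V^{\<otimes> r};
  for eps = 1/2 it is W_{n-1} = {w in W_n. w n = n} acting on V^{\<otimes> r} \<otimes> v_n
  inside V^{\<otimes>(r+1)}.\<close>
definition Phi_kernel :: "nat \<Rightarrow> nat \<Rightarrow> real \<Rightarrow> ((nat \<Rightarrow> nat) \<Rightarrow> 'k::ring_1) set" where
  "Phi_kernel n r eps =
    (if eps = 0 then
       {x. (\<forall>w. w \<notin> Wsym n \<longrightarrow> x w = 0) \<and>
           (\<forall>j\<in>tuples n r. tensor_action (Wsym n) x j = (\<lambda>_. 0))}
     else
       {x. (\<forall>w. w \<notin> {w \<in> Wsym n. w n = n} \<longrightarrow> x w = 0) \<and>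
           (\<forall>j\<in>tuples n r. tensor_action {w \<in> Wsym n. w n = n} x (j @ [n]) = (\<lambda>_. 0))})"

end

theory Submission
  imports Defs "HOL-Library.Disjoint_Sets"
begin

text \<open>A shape mu not dominated by the hook (r+1, 1^(d-r-1)) has fewer than d - r rows.
  A basis tensor v_j (with j of length r, possibly followed by the letter n, which W_d fixes)
  involves at most r of the letters 1..d, so by pigeonhole two absent letters a \<noteq> b are sent
  by d(t) into the same row of t^mu. The transposition (a b) fixes v_j, while
  y_st(w (a b)) = - y_st(w) because d(t) (a b) d(t)^-1 is an odd element of the row stabiliser.
  So the coefficients of y_st v_j cancel in pairs w, w (a b).\<close>

lemma young_Cons:
  "young (a # mu) = (\<lambda>j. (0, j)) ` {..<a} \<union> (\<lambda>(i, j). (Suc i, j)) ` young mu"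
  unfolding young_def by (auto simp: image_iff nth_Cons split: nat.splits)

lemma bij_betw_row_reading: "bij_betw (row_reading mu) (young mu) {1..sum_list mu}"
proof (induction mu)
  case Nil
  then show ?case by (simp add: young_def bij_betw_def)
next
  case (Cons a mu)
  let ?down = "\<lambda>(i, j). (Suc i, j)"
  have first_row: "bij_betw (row_reading (a # mu)) ((\<lambda>j. (0, j)) ` {..<a}) {1..a}"
    by (rule bij_betw_byWitness[where f' = "\<lambda>k. (0, k - 1)"])
      (auto simp: row_reading_def image_iff)
  have "bij_betw ((+) a \<circ> row_reading mu) (young mu) ((+) a ` {1..sum_list mu})"
    using Cons.IH by (rule bij_betw_trans) (simp add: inj_on_imp_bij_betw)
  moreover have "(+) a \<circ> row_reading mu = row_reading (a # mu) \<circ> ?down"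
    by (auto simp: row_reading_def)
  moreover have "bij_betw ?down (young mu) (?down ` young mu)"
    by (rule inj_on_imp_bij_betw) (auto simp: inj_on_def)
  ultimately have lower_rows:
    "bij_betw (row_reading (a # mu)) (?down ` young mu) {a + 1..a + sum_list mu}"
    by (simp add: bij_betw_comp_iff add.commute)
  have "bij_betw (row_reading (a # mu)) (young (a # mu)) ({1..a} \<union> {a + 1..a + sum_list mu})"
    unfolding young_Cons by (rule bij_betw_combine[OF first_row lower_rows]) auto
  moreover have "{1..a} \<union> {a + 1..a + sum_list mu} = {1..sum_list (a # mu)}"
    by auto
  ultimately show ?case by simp
qed

lemma partition_bij_betw_row_reading:
  "is_partition d mu \<Longrightarrow> bij_betw (row_reading mu) (young mu) {1..d}"
  using bij_betw_row_reading[of mu] by (simp add: is_partition_def)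

lemma dperm_permutes:
  assumes "is_partition d mu" and "tableau d mu t"
  shows "dperm d mu t permutes {1..d}"
proof (rule bij_imp_permutes)
  have "bij_betw (t \<circ> inv_into (young mu) (row_reading mu)) {1..d} {1..d}"
    using bij_betw_inv_into[OF partition_bij_betw_row_reading[OF assms(1)]] assms(2)
    unfolding tableau_def by (rule bij_betw_trans)
  then show "bij_betw (dperm d mu t) {1..d} {1..d}"
    by (rule bij_betw_cong[THEN iffD1, rotated]) (simp add: dperm_def)
qed (auto simp: dperm_def)

definition row_of :: "nat list \<Rightarrow> nat \<Rightarrow> nat" where
  "row_of mu k = fst (inv_into (young mu) (row_reading mu) k)"

lemma row_of_less_length:
  assumes "is_partition d mu" and "k \<in> {1..d}"
  shows "row_of mu k < length mu"
proof -
  have "inv_into (young mu) (row_reading mu) k \<in> young mu"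
    using bij_betw_inv_into[OF partition_bij_betw_row_reading[OF assms(1)]] assms(2)
    by (rule bij_betw_apply)
  then show ?thesis by (auto simp: row_of_def young_def)
qed

lemma row_stab_iff:
  assumes "is_partition d mu"
  shows "w \<in> row_stab d mu \<longleftrightarrow> w \<in> Wsym d \<and> (\<forall>k\<in>{1..d}. row_of mu (w k) = row_of mu k)"
proof -
  have bij: "bij_betw (row_reading mu) (young mu) {1..d}"
    using assms by (rule partition_bij_betw_row_reading)
  have "fst c = row_of mu (row_reading mu c)" if "c \<in> young mu" for c
    using bij that by (simp add: row_of_def bij_betw_inv_into_left)
  then have "w \<in> row_stab d mu \<longleftrightarrow>
      w \<in> Wsym d \<and> (\<forall>k\<in>row_reading mu ` young mu. row_of mu (w k) = row_of mu k)"
    unfolding row_stab_def row_of_def[symmetric] by auto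
  moreover have "row_reading mu ` young mu = {1..d}"
    using bij by (simp add: bij_betw_def)
  ultimately show ?thesis by (simp only:)
qed

lemma row_stab_comp:
  assumes "is_partition d mu" and "u \<in> row_stab d mu" and "v \<in> row_stab d mu"
  shows "u \<circ> v \<in> row_stab d mu"
proof -
  have "v permutes {1..d}" and "u permutes {1..d}"
    using assms by (simp_all add: row_stab_iff Wsym_def)
  moreover have "row_of mu (u (v k)) = row_of mu k" if "k \<in> {1..d}" for k
  proof -
    have "v k \<in> {1..d}"
      using \<open>v permutes {1..d}\<close> that by (simp only: permutes_in_image)
    then show ?thesis
      using assms that by (simp add: row_stab_iff)
  qed
  ultimately show ?thesis
    using assms(1) by (simp add: row_stab_iff Wsym_def permutes_compose)
qed

lemma transpose_in_row_stab:
  assumes "is_partition d mu" and "a \<in> {1..d}" and "b \<in> {1..d}"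
    and "row_of mu a = row_of mu b"
  shows "transpose a b \<in> row_stab d mu"
  using assms by (auto simp: row_stab_iff Wsym_def permutes_swap_id transpose_def)

lemma y_lam_comp_transpose:
  assumes "is_partition d mu" and "a \<in> {1..d}" and "b \<in> {1..d}" and "a \<noteq> b"
    and "row_of mu a = row_of mu b"
  shows "(y_lam d mu (u \<circ> transpose a b) :: 'k::ring_1) = - y_lam d mu u"
proof -
  note \<tau> = transpose_in_row_stab[OF assms(1-3,5)]
  have "u \<circ> transpose a b \<in> row_stab d mu \<longleftrightarrow> u \<in> row_stab d mu"
    using row_stab_comp[OF assms(1) _ \<tau>, of "u \<circ> transpose a b"] row_stab_comp[OF assms(1) _ \<tau>]
    by (auto simp: comp_assoc)
  moreover have "sign (u \<circ> transpose a b) = - sign u" if "u \<in> row_stab d mu"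
    using that assms(4)
    by (auto simp: row_stab_iff[OF assms(1)] Wsym_def sign_compose sign_swap_id permutation_swap_id
        permutes_imp_permutation[OF finite_atLeastAtMost])
  ultimately show ?thesis by (simp add: y_lam_def)
qed

lemma finite_Wsym: "finite (Wsym d)"
  unfolding Wsym_def by (rule finite_permutations) simp

lemma inv_comp_eq_iff: "bij v \<Longrightarrow> bij g \<Longrightarrow> inv v \<circ> u = g \<longleftrightarrow> v = u \<circ> inv g"
  by (metis (no_types, lifting) ext bij_inv_eq_iff comp_apply)

lemma inv_comp_notin_Wsym: "v \<in> Wsym d \<Longrightarrow> u \<notin> Wsym d \<Longrightarrow> inv v \<circ> u \<notin> Wsym d"
  unfolding Wsym_def by (metis comp_assoc id_comp permutes_compose permutes_inv_o(1) mem_Collect_eq)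

lemma ga_delta_in_group_alg: "g \<in> Wsym d \<Longrightarrow> ga_delta g \<in> group_alg d"
  by (auto simp: ga_delta_def group_alg_def)

lemma ga_mult_in_group_alg: "y \<in> group_alg d \<Longrightarrow> ga_mult d x y \<in> group_alg d"
  by (simp add: group_alg_def ga_mult_def inv_comp_notin_Wsym)

lemma ga_mult_delta_left:
  assumes "g \<in> Wsym d"
  shows "ga_mult d (ga_delta g) x u = x (inv g \<circ> u)"
proof -
  have "ga_mult d (ga_delta g) x u = (\<Sum>v\<in>Wsym d. if v = g then x (inv g \<circ> u) else 0)"
    unfolding ga_mult_def ga_delta_def by (intro sum.cong) auto
  then show ?thesis
    using assms finite_Wsym by simp
qed

lemma ga_mult_delta_right:
  assumes "g \<in> Wsym d" and "x \<in> group_alg d"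
  shows "ga_mult d x (ga_delta g) u = x (u \<circ> inv g)"
proof -
  have "ga_mult d x (ga_delta g) u = (\<Sum>v\<in>Wsym d. if v = u \<circ> inv g then x v else 0)"
    unfolding ga_mult_def ga_delta_def
    using assms(1) by (intro sum.cong) (auto simp: Wsym_def permutes_bij inv_comp_eq_iff)
  also have "\<dots> = x (u \<circ> inv g)"
    using assms(2) finite_Wsym by (simp add: group_alg_def)
  finally show ?thesis .
qed

lemma y_lam_in_group_alg: "y_lam d mu \<in> group_alg d"
  by (simp add: y_lam_def group_alg_def row_stab_def)

lemma y_st_in_group_alg:
  "is_partition d mu \<Longrightarrow> tableau d mu t \<Longrightarrow> y_st d mu s t \<in> group_alg d"
  unfolding y_st_def using dperm_permutes[of d mu t]
  by (intro ga_mult_in_group_alg ga_delta_in_group_alg) (simp add: Wsym_def)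

lemma y_st_eq:
  assumes "is_partition d mu" and "tableau d mu s" and "tableau d mu t"
  shows "(y_st d mu s t u :: 'k::ring_1) = y_lam d mu (dperm d mu s \<circ> u \<circ> inv (dperm d mu t))"
proof -
  define P where "P = dperm d mu s"
  define Q where "Q = dperm d mu t"
  have P: "P permutes {1..d}" and Q: "Q permutes {1..d}"
    unfolding P_def Q_def using assms by (simp_all only: dperm_permutes)
  have "(y_st d mu s t u :: 'k) = ga_mult d (ga_delta (inv P)) (y_lam d mu) (u \<circ> inv Q)"
    unfolding y_st_def P_def[symmetric] Q_def[symmetric] using Q
    by (intro ga_mult_delta_right ga_mult_in_group_alg y_lam_in_group_alg) (simp add: Wsym_def)
  also have "\<dots> = y_lam d mu (inv (inv P) \<circ> (u \<circ> inv Q))"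
    using P by (intro ga_mult_delta_left) (simp add: Wsym_def permutes_inv)
  also have "\<dots> = y_lam d mu (P \<circ> u \<circ> inv Q)"
    using P by (simp add: inv_inv_eq permutes_bij comp_assoc)
  finally show ?thesis by (simp add: P_def Q_def)
qed

lemma y_st_comp_transpose:
  assumes "is_partition d mu" and "tableau d mu s" and "tableau d mu t"
    and "a \<in> {1..d}" and "b \<in> {1..d}" and "a \<noteq> b"
    and "row_of mu (dperm d mu t a) = row_of mu (dperm d mu t b)"
  shows "(y_st d mu s t (w \<circ> transpose a b) :: 'k::ring_1) = - y_st d mu s t w"
proof -
  define Q where "Q = dperm d mu t"
  have Q: "Q permutes {1..d}"
    unfolding Q_def using assms(1,3) by (rule dperm_permutes)
  then have "transpose a b \<circ> inv Q = inv Q \<circ> transpose (Q a) (Q b)"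
    by (simp add: transpose_comp_eq bij_imp_bij_inv inv_inv_eq permutes_bij)
  then have "dperm d mu s \<circ> (w \<circ> transpose a b) \<circ> inv Q
      = (dperm d mu s \<circ> w \<circ> inv Q) \<circ> transpose (Q a) (Q b)"
    by (simp add: comp_assoc)
  moreover have "Q a \<in> {1..d}" "Q b \<in> {1..d}"
    using Q assms(4,5) by (simp_all only: permutes_in_image)
  moreover have "Q a \<noteq> Q b"
    using permutes_inj[OF Q] assms(6) by (simp add: inj_eq)
  ultimately show ?thesis
    using assms by (simp add: y_st_eq Q_def y_lam_comp_transpose)
qed

lemma length_le_sum_list: "\<forall>p\<in>set xs. 0 < p \<Longrightarrow> length xs \<le> sum_list (xs :: nat list)"
  by (induction xs) auto

lemma dom_le_hook:
  assumes "is_partition d mu" and "r < d" and "d - r \<le> length mu"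
  shows "dom_le mu (hook d r)"
  unfolding dom_le_def
proof
  fix k
  have "sum_list (take k mu) + sum_list (drop k mu) = d"
    using assms(1) by (metis is_partition_def sum_list_append append_take_drop_id)
  moreover have "length (drop k mu) \<le> sum_list (drop k mu)"
    using assms(1) by (intro length_le_sum_list) (auto simp: is_partition_def dest: in_set_dropD)
  ultimately have "sum_list (take k mu) \<le> d" and "sum_list (take k mu) \<le> r + k"
    using assms(3) by auto
  then show "sum_list (take k mu) \<le> sum_list (take k (hook d r))"
    using assms(2) by (cases k) (auto simp: hook_def sum_list_replicate)
qed

lemma row_collision:
  assumes "is_partition d mu" and "\<not> dom_le mu (hook d r)" and "r < d"
    and "Q permutes {1..d}" and "card (A \<inter> {1..d}) \<le> r"
  obtains a b where "a \<in> {1..d} - A" and "b \<in> {1..d} - A" and "a \<noteq> b"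
    and "row_of mu (Q a) = row_of mu (Q b)"
proof -
  have "length mu < d - r"
    using dom_le_hook[OF assms(1,3)] assms(2) by linarith
  also have "d - r \<le> card ({1..d} - A \<inter> {1..d})"
    using assms(5) by (subst card_Diff_subset) auto
  also have "{1..d} - A \<inter> {1..d} = {1..d} - A"
    by auto
  finally have "length mu < card ({1..d} - A)" .
  moreover have "(row_of mu \<circ> Q) ` ({1..d} - A) \<subseteq> {..<length mu}"
    using row_of_less_length[OF assms(1)] permutes_in_image[OF assms(4)] by auto
  ultimately have "\<not> inj_on (row_of mu \<circ> Q) ({1..d} - A)"
    using card_inj_on_le[of "row_of mu \<circ> Q" "{1..d} - A" "{..<length mu}"] by auto
  then show ?thesis
    using that by (auto simp: inj_on_def)
qed

lemma y_st_tensor_action_eq_0: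
  assumes "is_partition d mu" and "\<not> dom_le mu (hook d r)" and "r < d"
    and "tableau d mu s" and "tableau d mu t" and "card (set jj \<inter> {1..d}) \<le> r"
  shows "(tensor_action (Wsym d) (y_st d mu s t) jj j' :: 'k::ring_1) = 0"
proof -
  obtain a b where ab: "a \<in> {1..d} - set jj" "b \<in> {1..d} - set jj" "a \<noteq> b"
    and row: "row_of mu (dperm d mu t a) = row_of mu (dperm d mu t b)"
    using row_collision[OF assms(1-3) dperm_permutes[OF assms(1,5)] assms(6)] .
  let ?X = "{w. w \<in> Wsym d \<and> map w jj = j'}"
  let ?h = "\<lambda>w. w \<circ> transpose a b"
  have "(\<Sum>w\<in>?X. (y_st d mu s t w :: 'k)) = 0"
  proof (rule sum_involution_eq_0)
    fix w assume w: "w \<in> ?X"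
    have "(y_st d mu s t (?h w) :: 'k) = - y_st d mu s t w"
      using ab by (intro y_st_comp_transpose[OF assms(1,4,5) _ _ ab(3) row]) auto
    then show "(y_st d mu s t (?h w) :: 'k) + y_st d mu s t w = 0"
      by simp
    have "map (?h w) jj = map w jj"
      using ab by (intro map_cong) (auto simp: transpose_def)
    then show "?h w \<in> ?X"
      using w ab by (auto simp: Wsym_def permutes_compose permutes_swap_id)
    show "?h (?h w) = w"
      by (simp add: comp_assoc)
    have "w b \<noteq> w a"
      using w ab(3) by (auto simp: Wsym_def dest: permutes_inj injD)
    then show "?h w \<noteq> w"
      by (metis comp_apply transpose_apply_first)
  qed
  then show ?thesis
    by (simp add: tensor_action_def)
qed

lemma tensor_action_sum:
  "tensor_action G (\<lambda>u. \<Sum>i\<in>S. c i * f i u) jj j' = (\<Sum>i\<in>S. c i * tensor_action G (f i) jj j')"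
  unfolding tensor_action_def by (subst sum.swap) (simp add: sum_distrib_left)

lemma cell_span_subset_group_alg:
  assumes "\<And>mu. P mu \<Longrightarrow> is_partition d mu"
  shows "(cell_span d P :: ((nat \<Rightarrow> nat) \<Rightarrow> 'k::ring_1) set) \<subseteq> group_alg d"
proof
  fix x :: "(nat \<Rightarrow> nat) \<Rightarrow> 'k"
  assume "x \<in> cell_span d P"
  then obtain S c where S: "S \<subseteq> {(mu, s, t). P mu \<and> tableau d mu s \<and> tableau d mu t \<and>
      standard mu s \<and> standard mu t}"
    and x: "x = (\<lambda>u. \<Sum>(mu, s, t)\<in>S. c (mu, s, t) * y_st d mu s t u)"
    unfolding cell_span_def by blast
  have "x w = 0" if w: "w \<notin> Wsym d" for w
    unfolding x
  proof (intro sum.neutral ballI, clarify)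
    fix mu s t assume "(mu, s, t) \<in> S"
    with S assms have "(y_st d mu s t :: (nat \<Rightarrow> nat) \<Rightarrow> 'k) \<in> group_alg d"
      by (blast intro: y_st_in_group_alg)
    with w show "c (mu, s, t) * y_st d mu s t w = 0"
      by (simp add: group_alg_def)
  qed
  then show "x \<in> group_alg d"
    by (simp add: group_alg_def)
qed

lemma cell_span_tensor_action_eq_0:
  assumes "x \<in> cell_span d (\<lambda>mu. is_partition d mu \<and> \<not> dom_le mu (hook d r))"
    and "r < d" and "card (set jj \<inter> {1..d}) \<le> r"
  shows "tensor_action (Wsym d) x jj = (\<lambda>_. 0)"
proof
  fix j'
  obtain S c where S: "S \<subseteq> {(mu, s, t). (is_partition d mu \<and> \<not> dom_le mu (hook d r)) \<and>
      tableau d mu s \<and> tableau d mu t \<and> standard mu s \<and> standard mu t}"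
    and x: "x = (\<lambda>u. \<Sum>(mu, s, t)\<in>S. c (mu, s, t) * y_st d mu s t u)"
    using assms(1) unfolding cell_span_def by blast
  have "tensor_action (Wsym d) x jj j'
      = (\<Sum>(mu, s, t)\<in>S. c (mu, s, t) * tensor_action (Wsym d) (y_st d mu s t) jj j')"
    unfolding x using tensor_action_sum[of _ "\<lambda>(mu, s, t). c (mu, s, t)"] by (simp add: case_prod_beta)
  also have "\<dots> = 0"
    using S assms(2,3) by (intro sum.neutral) (auto simp: y_st_tensor_action_eq_0)
  finally show "tensor_action (Wsym d) x jj j' = 0" .
qed

lemma Wsym_eq_stabiliser: "Wsym d = {w \<in> Wsym (Suc d). w (Suc d) = Suc d}"
  unfolding Wsym_def permutes_def by (auto simp: le_Suc_eq)

theorem proposition7p1: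
  fixes n r d :: nat and eps :: real
  assumes "0 < n" and "0 < r" and "eps \<in> {0, 1/2}"
    and "real d = real n - 2 * eps" and "d > r + 1"
  shows "(cell_span d (\<lambda>mu. is_partition d mu \<and> \<not> dom_le mu (hook d r))
           :: ((nat \<Rightarrow> nat) \<Rightarrow> 'k::ring_1) set) \<subseteq> Phi_kernel n r eps"
proof
  fix x :: "(nat \<Rightarrow> nat) \<Rightarrow> 'k"
  assume x: "x \<in> cell_span d (\<lambda>mu. is_partition d mu \<and> \<not> dom_le mu (hook d r))"
  then have "x \<in> group_alg d"
    using cell_span_subset_group_alg[of "\<lambda>mu. is_partition d mu \<and> \<not> dom_le mu (hook d r)" d]
    by auto
  then have support: "\<forall>w. w \<notin> Wsym d \<longrightarrow> x w = 0"
    by (simp add: group_alg_def)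
  have kills: "tensor_action (Wsym d) x jj = (\<lambda>_. 0)" if "set jj \<inter> {1..d} \<subseteq> set j"
    and "j \<in> tuples n r" for j jj
    using that assms(5) card_mono[OF finite_set that(1)] card_length[of j]
    by (intro cell_span_tensor_action_eq_0[OF x]) (auto simp: tuples_def)
  from assms(3,4) consider "eps = 0" "n = d" | "eps = 1/2" "n = Suc d"
    by fastforce
  then show "x \<in> Phi_kernel n r eps"
  proof cases
    case 1
    then show ?thesis
      using support kills[OF Int_lower1] by (simp add: Phi_kernel_def)
  next
    case 2
    have "tensor_action (Wsym d) x (j @ [n]) = (\<lambda>_. 0)" if "j \<in> tuples n r" for j
      using that 2 by (intro kills[of _ j]) auto
    with 2 support show ?thesis
      by (simp add: Phi_kernel_def Wsym_eq_stabiliser[symmetric])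
  qed
qed

end
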